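(* Let $U\in\mathbb{R}^{n\times d}$, let $\mathbf{x}_*\in\mathbb{R}^d$ be $s$-sparse, $\mathbf{e}\in\mathbb{R}^n$ and $\mathbf{y}=U\mathbf{x}_*+\mathbf{e}$. Let $\mathbf{x}_t$ be an iterate of Algorithm 1 and $\mathbf{x}_{t+1}$ the next iterate; let $\mathcal{S}_t,\mathcal{S}_{t+1},\mathcal{S}_*$ be the supports of $\mathbf{x}_t,\mathbf{x}_{t+1},\mathbf{x}_*$. If $|\mathcal{S}_t\setminus\mathcal{S}_*|\le s$ and $\lambda_t\ge\|U^\top\mathbf{e}\|_\infty+\frac{\delta_s+\sqrt2\theta_{s,s}}{\sqrt s}\|\mathbf{x}_t-\mathbf{x}_*\|_2$, then $|\mathcal{S}_{t+1}\setminus\mathcal{S}_*|\le s$ and $|\mathcal{S}_*\cup\mathcal{S}_t\cup\mathcal{S}_{t+1}|\le3s$.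
   Context: $U_{\mathcal T}$ is the column submatrix of $U$ indexed by $\mathcal T$. $\delta_s$ is the smallest constant $\ge0$ with $(1-\delta_s)\|\mathbf{v}\|_2^2\le\|U_{\mathcal T}\mathbf{v}\|_2^2\le(1+\delta_s)\|\mathbf{v}\|_2^2$ for all $|\mathcal T|\le s$, $\mathbf{v}\in\mathbb{R}^{|\mathcal T|}$; $\theta_{s,s}$ (with $2s\le d$) is the smallest constant with $|\langle U_{\mathcal T}\mathbf{v},U_{\mathcal T'}\mathbf{v}'\rangle|\le\theta_{s,s}\|\mathbf{v}\|_2\|\mathbf{v}'\|_2$ for all disjoint $\mathcal T,\mathcal T'$ of size at most $s$. Algorithm 1: $\mathbf{x}_1=0$ and $\mathbf{x}_{t+1}=\mathrm{sign}(\widehat{\mathbf{x}}_t)[|\widehat{\mathbf{x}}_t|-\lambda_t]_+$ with $\widehat{\mathbf{x}}_t=\mathbf{x}_t-U^\top(U\mathbf{x}_t-\mathbf{y})$ (componentwise), for parameters $\lambda_t>0$. *)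

theory Defs
  imports "HOL-Analysis.Analysis"
begin

definition supp :: "real^'d \<Rightarrow> 'd set" where
  "supp x = {i. x $ i \<noteq> 0}"

text \<open>A vector
  v indexed by T corresponds to a vector w in R^d supported in T, with U_T v = U w.\<close>
definition rip_const :: "real^'d^'n \<Rightarrow> nat \<Rightarrow> real" where
  "rip_const U s = Inf {\<delta>. \<delta> \<ge> 0 \<and>
     (\<forall>T w. card T \<le> s \<and> supp w \<subseteq> T \<longrightarrow>
        (1 - \<delta>) * (norm w)\<^sup>2 \<le> (norm (U *v w))\<^sup>2 \<and>
        (norm (U *v w))\<^sup>2 \<le> (1 + \<delta>) * (norm w)\<^sup>2)}"

definition roc_const :: "real^'d^'n \<Rightarrow> nat \<Rightarrow> real" where
  "roc_const U s = Inf {\<theta>.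
     (\<forall>T T' w w'. card T \<le> s \<and> card T' \<le> s \<and> T \<inter> T' = {} \<and>
        supp w \<subseteq> T \<and> supp w' \<subseteq> T' \<longrightarrow>
        \<bar>(U *v w) \<bullet> (U *v w')\<bar> \<le> \<theta> * norm w * norm w')}"

definition ista_step :: "real^'d^'n \<Rightarrow> real^'n \<Rightarrow> real \<Rightarrow> real^'d \<Rightarrow> real^'d" where
  "ista_step U y lam x =
     (let xh = x - transpose U *v (U *v x - y)
      in \<chi> i. sgn (xh $ i) * max (\<bar>xh $ i\<bar> - lam) 0)"

end

theory Submission
  imports Defs
begin

text \<open>Write \<open>h = x\<^sub>t - x\<^sub>*\<close> and \<open>g = (I - U\<^sup>T U) h\<close>. The gradient step gives
  \<open>x\<^sub>t - U\<^sup>T(U x\<^sub>t - y) = x\<^sub>* + g + U\<^sup>T e\<close>, so a coordinate outside \<open>supp x\<^sub>*\<close> survives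
  soft thresholding only if \<open>|g\<^sub>i| > \<lambda> - \<parallel>U\<^sup>T e\<parallel>\<^sub>\<infinity> \<ge> c \<parallel>h\<parallel> / \<surd>s\<close>, where
  \<open>c = \<delta>\<^sub>s + \<surd>2 \<theta>\<^sub>s\<^sub>,\<^sub>s\<close>. If there were more than \<open>s\<close> such coordinates, pick \<open>s\<close> of them,
  forming \<open>T\<close>, and let \<open>w\<close> be \<open>g\<close> restricted to \<open>T\<close>; then \<open>\<parallel>w\<parallel> > c \<parallel>h\<parallel>\<close>. On the other hand,
  splitting \<open>h\<close> along \<open>supp x\<^sub>*\<close>, \<open>T\<close> and the rest of \<open>supp x\<^sub>t\<close> (each of size at most \<open>s\<close>),
  the RIP bounds the \<open>T\<close>-part of \<open>\<langle>g, w\<rangle> = \<parallel>w\<parallel>\<^sup>2\<close> and restricted orthogonality the two other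
  parts, giving \<open>\<parallel>w\<parallel> \<le> c \<parallel>h\<parallel>\<close>.\<close>
definition rip_admissible :: "real^'d^'n \<Rightarrow> nat \<Rightarrow> real \<Rightarrow> bool" where
  "rip_admissible U s \<delta> \<longleftrightarrow> \<delta> \<ge> 0 \<and>
     (\<forall>T w. card T \<le> s \<and> supp w \<subseteq> T \<longrightarrow>
        (1 - \<delta>) * (norm w)\<^sup>2 \<le> (norm (U *v w))\<^sup>2 \<and>
        (norm (U *v w))\<^sup>2 \<le> (1 + \<delta>) * (norm w)\<^sup>2)"

definition roc_admissible :: "real^'d^'n \<Rightarrow> nat \<Rightarrow> real \<Rightarrow> bool" where
  "roc_admissible U s \<theta> \<longleftrightarrow>
     (\<forall>T T' w w'. card T \<le> s \<and> card T' \<le> s \<and> T \<inter> T' = {} \<and>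
        supp w \<subseteq> T \<and> supp w' \<subseteq> T' \<longrightarrow>
        \<bar>(U *v w) \<bullet> (U *v w')\<bar> \<le> \<theta> * norm w * norm w')"

lemma rip_const_eq_Inf: "rip_const U s = Inf (Collect (rip_admissible U s))"
  unfolding rip_const_def rip_admissible_def ..

lemma roc_const_eq_Inf: "roc_const U s = Inf (Collect (roc_admissible U s))"
  unfolding roc_const_def roc_admissible_def ..

lemma rip_admissible_ex: "\<exists>\<delta>. rip_admissible U s \<delta>"
proof -
  obtain B where B: "B > 0" "\<And>x. norm (U *v x) \<le> B * norm x"
    using linear_bounded_pos[OF matrix_vector_mul_linear] by blast
  have "(1 - (B\<^sup>2 + 1)) * (norm w)\<^sup>2 \<le> (norm (U *v w))\<^sup>2 \<and>
        (norm (U *v w))\<^sup>2 \<le> (1 + (B\<^sup>2 + 1)) * (norm w)\<^sup>2" for w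
  proof
    have "(1 - (B\<^sup>2 + 1)) * (norm w)\<^sup>2 \<le> 0" by simp
    also have "\<dots> \<le> (norm (U *v w))\<^sup>2" by simp
    finally show "(1 - (B\<^sup>2 + 1)) * (norm w)\<^sup>2 \<le> (norm (U *v w))\<^sup>2" .
    have "(norm (U *v w))\<^sup>2 \<le> (B * norm w)\<^sup>2"
      by (rule power_mono[OF B(2) norm_ge_zero])
    also have "\<dots> \<le> (1 + (B\<^sup>2 + 1)) * (norm w)\<^sup>2"
      unfolding power_mult_distrib by (intro mult_right_mono) simp_all
    finally show "(norm (U *v w))\<^sup>2 \<le> (1 + (B\<^sup>2 + 1)) * (norm w)\<^sup>2" .
  qed
  then have "rip_admissible U s (B\<^sup>2 + 1)"
    unfolding rip_admissible_def by simp
  then show ?thesis ..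
qed

lemma roc_admissible_ex: "\<exists>\<theta>. roc_admissible U s \<theta>"
proof -
  obtain B where B: "B > 0" "\<And>x. norm (U *v x) \<le> B * norm x"
    using linear_bounded_pos[OF matrix_vector_mul_linear] by blast
  have "\<bar>(U *v w) \<bullet> (U *v w')\<bar> \<le> B\<^sup>2 * norm w * norm w'" for w w'
  proof -
    have "\<bar>(U *v w) \<bullet> (U *v w')\<bar> \<le> norm (U *v w) * norm (U *v w')"
      by (rule Cauchy_Schwarz_ineq2)
    also have "\<dots> \<le> (B * norm w) * (B * norm w')"
      using B by (intro mult_mono) auto
    finally show ?thesis
      by (simp add: power2_eq_square algebra_simps)
  qed
  then have "roc_admissible U s (B\<^sup>2)"
    unfolding roc_admissible_def by blast
  then show ?thesis ..
qed

lemma rip_const_nonneg: "0 \<le> rip_const U s"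
  unfolding rip_const_eq_Inf
proof (rule cInf_greatest)
  show "Collect (rip_admissible U s) \<noteq> {}" using rip_admissible_ex by blast
qed (simp add: rip_admissible_def)

lemma rip_const_bounds:
  assumes "card T \<le> s" "supp w \<subseteq> T"
  shows "(1 - rip_const U s) * (norm w)\<^sup>2 \<le> (norm (U *v w))\<^sup>2"
    and "(norm (U *v w))\<^sup>2 \<le> (1 + rip_const U s) * (norm w)\<^sup>2"
proof -
  define a b where "a = (norm (U *v w))\<^sup>2" and "b = (norm w)\<^sup>2"
  have "(1 - rip_const U s) * b \<le> a \<and> a \<le> (1 + rip_const U s) * b"
  proof (cases "w = 0")
    case False
    then have b: "b > 0" by (simp add: b_def)
    have "\<bar>a / b - 1\<bar> \<le> rip_const U s"
      unfolding rip_const_eq_Inf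
    proof (rule cInf_greatest)
      show "Collect (rip_admissible U s) \<noteq> {}" using rip_admissible_ex by blast
      fix \<delta> assume "\<delta> \<in> Collect (rip_admissible U s)"
      then have "(1 - \<delta>) * b \<le> a" "a \<le> (1 + \<delta>) * b"
        using assms unfolding a_def b_def rip_admissible_def by auto
      with b show "\<bar>a / b - 1\<bar> \<le> \<delta>" by (simp add: abs_le_iff field_simps)
    qed
    with b show ?thesis by (simp add: abs_le_iff field_simps)
  qed (simp add: a_def b_def)
  then show "(1 - rip_const U s) * (norm w)\<^sup>2 \<le> (norm (U *v w))\<^sup>2"
    and "(norm (U *v w))\<^sup>2 \<le> (1 + rip_const U s) * (norm w)\<^sup>2"
    unfolding a_def b_def by auto
qed

lemma roc_const_bound:
  assumes "card T \<le> s" "card T' \<le> s" "T \<inter> T' = {}" "supp w \<subseteq> T" "supp w' \<subseteq> T'"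
  shows "\<bar>(U *v w) \<bullet> (U *v w')\<bar> \<le> roc_const U s * norm w * norm w'"
proof (cases "w = 0 \<or> w' = 0")
  case False
  then have p: "norm w * norm w' > 0" by simp
  have "\<bar>(U *v w) \<bullet> (U *v w')\<bar> / (norm w * norm w') \<le> roc_const U s"
    unfolding roc_const_eq_Inf
  proof (intro cInf_greatest)
    fix \<theta> assume "\<theta> \<in> Collect (roc_admissible U s)"
    then have "\<bar>(U *v w) \<bullet> (U *v w')\<bar> \<le> \<theta> * (norm w * norm w')"
      using assms unfolding roc_admissible_def mult.assoc by blast
    with p show "\<bar>(U *v w) \<bullet> (U *v w')\<bar> / (norm w * norm w') \<le> \<theta>"
      by (simp add: field_simps)
  qed (use roc_admissible_ex in auto)
  with p show ?thesis by (simp add: field_simps)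
qed auto

lemma supp_axis: "supp (axis i (1::real)) = {i}"
  unfolding supp_def by (auto simp: axis_def)

text \<open>With fewer than two coordinates one of two disjoint supports is always empty, every
  \<open>\<theta>\<close> is admissible and \<^const>\<open>roc_const\<close> is a junk value; hence the cardinality hypothesis.\<close>

lemma roc_const_nonneg:
  fixes U :: "real^'d^'n"
  assumes "1 \<le> s" "2 \<le> CARD('d)"
  shows "0 \<le> roc_const U s"
proof -
  obtain i j :: 'd where "i \<noteq> j"
    using assms(2) by (metis card_2_iff obtain_subset_with_card_n)
  have admissible_nonneg: "0 \<le> \<theta>" if "roc_admissible U s \<theta>" for \<theta>
    using that[unfolded roc_admissible_def, rule_format, of "{i}" "{j}" "axis i 1" "axis j 1"]
      \<open>i \<noteq> j\<close> assms(1) by (simp add: supp_axis)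
  show ?thesis
    unfolding roc_const_eq_Inf
  proof (rule cInf_greatest)
    show "Collect (roc_admissible U s) \<noteq> {}" using roc_admissible_ex by blast
  qed (simp add: admissible_nonneg)
qed

lemma supp_add: "supp (x + y) \<subseteq> supp x \<union> supp y"
  unfolding supp_def by auto

lemma supp_diff: "supp (x - y) \<subseteq> supp x \<union> supp y"
  unfolding supp_def by auto

lemma supp_scaleR: "supp (c *\<^sub>R x) \<subseteq> supp x"
  unfolding supp_def by auto

lemma inner_eq_zero_if_supp_disjoint: "supp x \<inter> supp y = {} \<Longrightarrow> x \<bullet> y = 0"
  unfolding inner_vec_def supp_def by (rule sum.neutral) auto

lemma rip_inner_defect_le_half_sum:
  assumes "card T \<le> s" "supp w \<subseteq> T" "supp v \<subseteq> T"
  shows "\<bar>w \<bullet> v - (U *v w) \<bullet> (U *v v)\<bar> \<le> rip_const U s * ((norm w)\<^sup>2 + (norm v)\<^sup>2) / 2"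
proof -
  define P where "P = (norm (w + v))\<^sup>2 - (norm (U *v (w + v)))\<^sup>2"
  define M where "M = (norm (w - v))\<^sup>2 - (norm (U *v (w - v)))\<^sup>2"
  have "supp (w + v) \<subseteq> T" "supp (w - v) \<subseteq> T"
    using assms(2,3) supp_add supp_diff by blast+
  then have P: "\<bar>P\<bar> \<le> rip_const U s * (norm (w + v))\<^sup>2"
    and M: "\<bar>M\<bar> \<le> rip_const U s * (norm (w - v))\<^sup>2"
    unfolding P_def M_def abs_le_iff
    using rip_const_bounds[OF assms(1), of "w + v" U] rip_const_bounds[OF assms(1), of "w - v" U]
    by (auto simp: algebra_simps)
  have "P - M = 4 * (w \<bullet> v - (U *v w) \<bullet> (U *v v))"
    unfolding P_def M_def
    by (simp add: power2_norm_eq_inner matrix_vector_right_distrib matrix_vector_mult_diff_distrib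
        algebra_simps inner_commute)
  then have "4 * \<bar>w \<bullet> v - (U *v w) \<bullet> (U *v v)\<bar> = \<bar>P - M\<bar>"
    by (simp only: abs_mult abs_numeral)
  also have "\<dots> \<le> \<bar>P\<bar> + \<bar>M\<bar>"
    by (rule abs_triangle_ineq4)
  also have "\<dots> \<le> rip_const U s * ((norm (w + v))\<^sup>2 + (norm (w - v))\<^sup>2)"
    using P M by (simp add: distrib_left)
  also have "\<dots> = 4 * (rip_const U s * ((norm w)\<^sup>2 + (norm v)\<^sup>2) / 2)"
    by (simp add: power2_norm_eq_inner algebra_simps inner_commute)
  finally show ?thesis
    by simp
qed

lemma rip_inner_defect_le:
  assumes "card T \<le> s" "supp w \<subseteq> T" "supp v \<subseteq> T"
  shows "\<bar>w \<bullet> v - (U *v w) \<bullet> (U *v v)\<bar> \<le> rip_const U s * norm w * norm v"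
proof (cases "w = 0 \<or> v = 0")
  case False
  define p q where "p = norm w" and "q = norm v"
  have pq: "p > 0" "q > 0" using False by (auto simp: p_def q_def)
  have "(q *\<^sub>R w) \<bullet> (p *\<^sub>R v) - (U *v (q *\<^sub>R w)) \<bullet> (U *v (p *\<^sub>R v))
      = (p * q) * (w \<bullet> v - (U *v w) \<bullet> (U *v v))"
    by (simp add: matrix_vector_mult_scaleR algebra_simps)
  then have "(p * q) * \<bar>w \<bullet> v - (U *v w) \<bullet> (U *v v)\<bar>
      = \<bar>(q *\<^sub>R w) \<bullet> (p *\<^sub>R v) - (U *v (q *\<^sub>R w)) \<bullet> (U *v (p *\<^sub>R v))\<bar>"
    using pq by (simp add: abs_mult)
  also have "\<dots> \<le> rip_const U s * ((norm (q *\<^sub>R w))\<^sup>2 + (norm (p *\<^sub>R v))\<^sup>2) / 2"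
    using assms supp_scaleR by (intro rip_inner_defect_le_half_sum) blast+
  also have "\<dots> = (p * q) * (rip_const U s * p * q)"
    using pq by (simp add: p_def q_def power2_eq_square algebra_simps)
  finally show ?thesis
    using pq by (simp add: p_def q_def)
qed auto

definition restrict_vec :: "'d set \<Rightarrow> real^'d \<Rightarrow> real^'d" where
  "restrict_vec A x = (\<chi> i. if i \<in> A then x $ i else 0)"

lemma restrict_vec_nth [simp]: "restrict_vec A x $ i = (if i \<in> A then x $ i else 0)"
  unfolding restrict_vec_def by simp

lemma supp_restrict_vec: "supp (restrict_vec A x) \<subseteq> A"
  unfolding supp_def by auto

lemma inner_restrict_vec: "x \<bullet> restrict_vec A y = (\<Sum>i\<in>A. x $ i * y $ i)"
  unfolding inner_vec_def by (simp add: if_distrib sum.If_cases)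

lemma norm_restrict_vec_le: "norm (restrict_vec A x) \<le> norm x"
  by (rule norm_le_componentwise_cart) simp

lemma norm_restrict_vec_add_le_sqrt2:
  assumes "A \<inter> B = {}"
  shows "norm (restrict_vec A x) + norm (restrict_vec B x) \<le> sqrt 2 * norm x"
proof (rule power2_le_imp_le)
  have "restrict_vec (A \<union> B) x = restrict_vec A x + restrict_vec B x"
    using assms by (auto simp: vec_eq_iff)
  moreover have "restrict_vec A x \<bullet> restrict_vec B x = 0"
    using assms supp_restrict_vec by (intro inner_eq_zero_if_supp_disjoint) blast
  ultimately have "(norm (restrict_vec A x))\<^sup>2 + (norm (restrict_vec B x))\<^sup>2
      = (norm (restrict_vec (A \<union> B) x))\<^sup>2"
    by (simp add: norm_add_Pythagorean[unfolded orthogonal_def])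
  also have "\<dots> \<le> (norm x)\<^sup>2"
    using norm_restrict_vec_le by (simp add: power_mono)
  finally have "(norm (restrict_vec A x))\<^sup>2 + (norm (restrict_vec B x))\<^sup>2 \<le> (norm x)\<^sup>2" .
  moreover have "(norm (restrict_vec A x) + norm (restrict_vec B x))\<^sup>2
      \<le> 2 * ((norm (restrict_vec A x))\<^sup>2 + (norm (restrict_vec B x))\<^sup>2)"
    using sum_squares_bound[of "norm (restrict_vec A x)" "norm (restrict_vec B x)"]
    by (simp add: power2_sum)
  ultimately show "(norm (restrict_vec A x) + norm (restrict_vec B x))\<^sup>2 \<le> (sqrt 2 * norm x)\<^sup>2"
    by (simp add: power_mult_distrib)
qed simp

lemma inner_isometry_defect_le:
  fixes U :: "real^'d^'n"
  assumes "card S \<le> s" "card T \<le> s" "card A \<le> s"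
    and "S \<inter> T = {}" "S \<inter> A = {}" "T \<inter> A = {}"
    and "supp h \<subseteq> S \<union> T \<union> A" "supp w \<subseteq> T"
    and "0 \<le> roc_const U s"
  shows "\<bar>(h - transpose U *v (U *v h)) \<bullet> w\<bar>
      \<le> (rip_const U s + sqrt 2 * roc_const U s) * norm h * norm w"
proof -
  define hS hT hA where "hS = restrict_vec S h" and "hT = restrict_vec T h" and "hA = restrict_vec A h"
  have supps: "supp hS \<subseteq> S" "supp hT \<subseteq> T" "supp hA \<subseteq> A"
    unfolding hS_def hT_def hA_def by (rule supp_restrict_vec)+
  have "h = hS + hT + hA"
    using assms(4-7) by (auto simp: vec_eq_iff hS_def hT_def hA_def supp_def)
  moreover have "hS \<bullet> w = 0" "hA \<bullet> w = 0"
    using assms(4,6,8) supps by (auto intro!: inner_eq_zero_if_supp_disjoint)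
  ultimately have "(h - transpose U *v (U *v h)) \<bullet> w
      = (hT \<bullet> w - (U *v hT) \<bullet> (U *v w)) - (U *v hS) \<bullet> (U *v w) - (U *v hA) \<bullet> (U *v w)"
    by (simp add: inner_diff_left dot_lmul_matrix matrix_vector_right_distrib inner_add_left)
  also have "\<bar>\<dots>\<bar> \<le> rip_const U s * norm hT * norm w
      + roc_const U s * norm hS * norm w + roc_const U s * norm hA * norm w"
    using rip_inner_defect_le[OF assms(2) supps(2) assms(8), where U = U]
      roc_const_bound[OF assms(1,2,4) supps(1) assms(8), where U = U]
      roc_const_bound[OF assms(3,2) _ supps(3) assms(8), where U = U] assms(6)
    by (simp add: Int_commute abs_le_iff)
  also have "\<dots> = (rip_const U s * norm hT + roc_const U s * (norm hS + norm hA)) * norm w"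
    by (simp add: algebra_simps)
  also have "\<dots> \<le> (rip_const U s * norm h + roc_const U s * (sqrt 2 * norm h)) * norm w"
    using assms(5,9) rip_const_nonneg norm_restrict_vec_le norm_restrict_vec_add_le_sqrt2
    unfolding hS_def hT_def hA_def
    by (intro mult_right_mono add_mono mult_left_mono) auto
  finally show ?thesis
    by (simp add: algebra_simps)
qed

lemma card_le_if_entries_large:
  fixes g :: "real^'d"
  assumes "1 \<le> s" "0 \<le> C"
    and large: "\<And>i. i \<in> B \<Longrightarrow> C / sqrt s < \<bar>g $ i\<bar>"
    and tested: "\<And>T w. T \<subseteq> B \<Longrightarrow> card T = s \<Longrightarrow> supp w \<subseteq> T \<Longrightarrow> g \<bullet> w \<le> C * norm w"
  shows "card B \<le> s"
proof (rule ccontr)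
  assume "\<not> card B \<le> s"
  then obtain T where T: "T \<subseteq> B" "card T = s"
    by (meson obtain_subset_with_card_n not_le less_imp_le)
  define w where "w = restrict_vec T g"
  have "C\<^sup>2 = (\<Sum>i\<in>T. (C / sqrt s)\<^sup>2)"
    using T(2) assms(1) by (simp add: power_divide)
  also have "\<dots> < (\<Sum>i\<in>T. g $ i * g $ i)"
  proof (rule sum_strict_mono)
    show "T \<noteq> {}" using T(2) assms(1) by auto
    fix i assume "i \<in> T"
    then have "(C / sqrt s)\<^sup>2 < \<bar>g $ i\<bar>\<^sup>2"
      using T(1) large assms(2) by (intro power_strict_mono) auto
    then show "(C / sqrt s)\<^sup>2 < g $ i * g $ i"
      by (simp add: power2_eq_square)
  qed simp
  also have "\<dots> = g \<bullet> w"
    by (simp add: w_def inner_restrict_vec)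
  finally have "C\<^sup>2 < g \<bullet> w" .
  moreover have "g \<bullet> w = (norm w)\<^sup>2"
    by (simp add: w_def power2_norm_eq_inner inner_restrict_vec)
  moreover have "g \<bullet> w \<le> C * norm w"
    using T supp_restrict_vec unfolding w_def by (rule tested)
  ultimately have "C * C < C * norm w" "norm w * norm w \<le> C * norm w"
    by (simp_all add: power2_eq_square)
  moreover from this(2) have "norm w \<le> C"
    using assms(2) by (cases "norm w = 0") (auto simp: mult_le_cancel_right)
  ultimately show False
    using assms(2) mult_left_mono[of "norm w" C C] by linarith
qed

lemma ista_step_new_support_entry_large:
  fixes U :: "real^'d^'n"
  assumes "i \<in> supp (ista_step U (U *v xstar + e) lam x) - supp xstar"
  shows "lam - infnorm (transpose U *v e)
      < \<bar>((x - xstar) - transpose U *v (U *v (x - xstar))) $ i\<bar>"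
proof -
  define g where "g = (x - xstar) - transpose U *v (U *v (x - xstar))"
  have "x - transpose U *v (U *v x - (U *v xstar + e)) = xstar + g + transpose U *v e"
    unfolding g_def by (simp add: matrix_vector_mult_diff_distrib algebra_simps)
  moreover have "ista_step U (U *v xstar + e) lam x $ i \<noteq> 0" "xstar $ i = 0"
    using assms by (auto simp: supp_def)
  ultimately have "lam < \<bar>g $ i + (transpose U *v e) $ i\<bar>"
    by (auto simp: ista_step_def max_def split: if_splits)
  moreover have "\<bar>(transpose U *v e) $ i\<bar> \<le> infnorm (transpose U *v e)"
    by (rule component_le_infnorm_cart)
  ultimately show ?thesis
    unfolding g_def by linarith
qed

lemma card_ista_step_new_support_le:
  fixes U :: "real^'d^'n"
  assumes "2 * s \<le> CARD('d)"
    and "card (supp xstar) \<le> s"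
    and "card (supp xt - supp xstar) \<le> s"
    and "lam \<ge> infnorm (transpose U *v e)
               + (rip_const U s + sqrt 2 * roc_const U s) / sqrt (real s) * norm (xt - xstar)"
  shows "card (supp (ista_step U (U *v xstar + e) lam xt) - supp xstar) \<le> s"
proof (cases "s = 0")
  case True
  then have "xt = xstar"
    using assms(2,3) by (auto simp: supp_def vec_eq_iff)
  have "supp (ista_step U (U *v xstar + e) lam xt) - supp xstar = {}"
  proof (rule equals0I)
    fix i assume "i \<in> supp (ista_step U (U *v xstar + e) lam xt) - supp xstar"
    from ista_step_new_support_entry_large[OF this] show False
      using assms(4) \<open>xt = xstar\<close> by simp
  qed
  then show ?thesis by (metis card.empty le0)
next
  case False
  define h where "h = xt - xstar"
  define c where "c = rip_const U s + sqrt 2 * roc_const U s"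
  have roc: "0 \<le> roc_const U s"
    using False assms(1) by (intro roc_const_nonneg) auto
  show ?thesis
  proof (rule card_le_if_entries_large[where g = "h - transpose U *v (U *v h)" and C = "c * norm h"])
    show "0 \<le> c * norm h"
      unfolding c_def using roc rip_const_nonneg[of U s] by simp
    show "c * norm h / sqrt s < \<bar>(h - transpose U *v (U *v h)) $ i\<bar>"
      if "i \<in> supp (ista_step U (U *v xstar + e) lam xt) - supp xstar" for i
      using ista_step_new_support_entry_large[OF that] assms(4) unfolding h_def c_def by simp
    fix T w
    assume T: "T \<subseteq> supp (ista_step U (U *v xstar + e) lam xt) - supp xstar" "card T = s"
      and "supp w \<subseteq> T"
    have "supp h \<subseteq> supp xstar \<union> T \<union> (supp xt - supp xstar - T)"
      using supp_diff[of xt xstar] unfolding h_def by blast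
    moreover have "card (supp xt - supp xstar - T) \<le> s"
      using assms(3) card_mono[of "supp xt - supp xstar" "supp xt - supp xstar - T"] by simp
    ultimately have "\<bar>(h - transpose U *v (U *v h)) \<bullet> w\<bar> \<le> c * norm h * norm w"
      unfolding c_def using T assms(2) roc \<open>supp w \<subseteq> T\<close>
      by (intro inner_isometry_defect_le) auto
    then show "(h - transpose U *v (U *v h)) \<bullet> w \<le> c * norm h * norm w"
      by simp
  qed (use False in simp)
qed

theorem corollary2:
  fixes U :: "real^'d^'n" and xstar xt :: "real^'d" and e :: "real^'n"
    and s :: nat and lam :: real
  assumes "2 * s \<le> CARD('d)"
    and "card (supp xstar) \<le> s"
    and "lam > 0"
    and "card (supp xt - supp xstar) \<le> s"
    and "lam \<ge> infnorm (transpose U *v e)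
               + (rip_const U s + sqrt 2 * roc_const U s) / sqrt (real s) * norm (xt - xstar)"
  shows "card (supp (ista_step U (U *v xstar + e) lam xt) - supp xstar) \<le> s
       \<and> card (supp xstar \<union> supp xt \<union> supp (ista_step U (U *v xstar + e) lam xt)) \<le> 3 * s"
proof -
  let ?S1 = "supp (ista_step U (U *v xstar + e) lam xt)"
  have new: "card (?S1 - supp xstar) \<le> s"
    using assms(1,2,4,5) by (rule card_ista_step_new_support_le)
  have "card (supp xstar \<union> supp xt \<union> ?S1)
      = card (supp xstar \<union> (supp xt - supp xstar) \<union> (?S1 - supp xstar))"
    by (rule arg_cong[where f = card]) auto
  also have "\<dots> \<le> card (supp xstar \<union> (supp xt - supp xstar)) + card (?S1 - supp xstar)"
    by (rule card_Un_le)
  also have "\<dots> \<le> card (supp xstar) + card (supp xt - supp xstar) + card (?S1 - supp xstar)"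
    using card_Un_le by (rule add_right_mono)
  finally show ?thesis
    using new assms(2,4) by linarith
qed

end
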